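(* Let $(\mu,b)$ be a stable configuration under perfect observability for the objective game $G$, with aggregate outcome $\varphi_{\mu,b}$. Then for each $i\in N$, every $\bar\theta_i\in\operatorname{supp}\mu_i$ and every $\theta\in\operatorname{supp}\mu$, $$\Pi_{\bar\theta_i}(\mu;b)=\pi_i(b(\theta))=\pi_i(\varphi_{\mu,b}).$$
   Context: Objective game: $G=(N,A,\pi)$ is a finite $n$-player normal-form game, $N=\{1,\dots,n\}$, finite action sets $A_i$, $A=\prod_{i\in N}A_i$, material payoff (fitness) functions $\pi_i:A\to\mathbb{R}$, extended multilinearly to mixed profiles in $\prod_{i}\Delta(A_i)$ and linearly to correlated strategies: $\pi_i(\varphi)=\sum_{a\in A}\varphi(a)\pi_i(a)$ for $\varphi\in\Delta(A)$; $\pi=(\pi_1,\dots,\pi_n)$. Preference types: $\Theta=\mathbb{R}^A$ (utility functions on $A$, extended multilinearly to mixed profiles). $\mathcal{M}(\Theta^n)$ is the set of product distributions $\mu=\mu_1\times\dots\times\mu_n$ on $\Theta^n$ with each $\mu_i$ finitely supported; $\operatorname{supp}\mu=\prod_i\operatorname{supp}\mu_i$, $\mu(\theta)=\prod_i\mu_i(\theta_i)$, $\mu_{-i}(\theta_{-i})=\prod_{j\neq i}\mu_j(\theta_j)$. Mutants: for nonempty $J\subseteq N$, a mutant sub-profile is $\tilde\theta_J\in\prod_{j\in J}(\Theta\setminus\operatorname{supp}\mu_j)$ with shares $\varepsilon=(\varepsilon_j)_{j\in J}\in(0,1)^{|J|}$, $\|\varepsilon\|=\max_j\varepsilon_j$;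 the post-entry distribution $\tilde\mu^\varepsilon$ has $\tilde\mu^\varepsilon_i=(1-\varepsilon_i)\mu_i+\varepsilon_i\delta_{\tilde\theta_i}$ for $i\in J$ and $\tilde\mu^\varepsilon_i=\mu_i$ otherwise. Perfect observability: for $\mu\in\mathcal M(\Theta^n)$, an equilibrium is a map $b:\operatorname{supp}\mu\to\prod_i\Delta(A_i)$ such that for each $\theta$, $b(\theta)$ is a Nash equilibrium of the normal-form game with action sets $A_i$ and payoffs $\theta_1,\dots,\theta_n$; $B_1(\mu)$ is the set of these; $(\mu,b)$ with $b\in B_1(\mu)$ is a configuration. Its aggregate outcome is $\varphi_{\mu,b}\in\Delta(A)$, $\varphi_{\mu,b}(a)=\sum_{\theta\in\operatorname{supp}\mu}\mu(\theta)\prod_{i}b_i(\theta)(a_i)$. Average fitness of $\theta_i\in\operatorname{supp}\mu_i$: $\Pi_{\theta_i}(\mu;b)=\sum_{\theta'_{-i}\in\operatorname{supp}\mu_{-i}}\mu_{-i}(\theta'_{-i})\pi_i(b(\theta_i,\theta'_{-i}))$. $(\mu,b)$ is balanced if for each $i$ all types in $\operatorname{supp}\mu_i$ have equal average fitness. Focal set: $B_1(\tilde\mu^\varepsilon;b)=\{\tilde b\in B_1(\tilde\mu^\varepsilon):\tilde b(\theta)=b(\theta)\ \forall\theta\in\operatorname{supp}\mu\}$. $(\mu,b)$ is stable if it is balanced and for every nonempty $J\subseteq N$ and every mutant sub-profile $\tilde\theta_J$ there is $\bar\epsilon\in(0,1)$ such that for every $\varepsilon\in(0,1)^{|J|}$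 with $\|\varepsilon\|<\bar\epsilon$ and every $\tilde b\in B_1(\tilde\mu^\varepsilon;b)$, either (i) there is $j\in J$ with $\Pi_{\theta_j}(\tilde\mu^\varepsilon;\tilde b)>\Pi_{\tilde\theta_j}(\tilde\mu^\varepsilon;\tilde b)$ for all $\theta_j\in\operatorname{supp}\mu_j$, or (ii) for every $i\in N$ all types in $\operatorname{supp}\tilde\mu^\varepsilon_i$ have equal average fitness under $(\tilde\mu^\varepsilon,\tilde b)$. *)

theory Defs
  imports Complex_Main "HOL-Library.FuncSet"
begin

text \<open>Players form a finite type 'i (N = UNIV). Preference types are
  utility functions on A, represented as functions on all of 'i => 'a that
  vanish outside A (so that Theta corresponds exactly to R^A).\<close>

type_synonym ('i,'a) utility = "('i \<Rightarrow> 'a) \<Rightarrow> real"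

definition profiles :: "('i \<Rightarrow> 'a set) \<Rightarrow> ('i \<Rightarrow> 'a) set" where
  "profiles As = PiE UNIV As"

definition finite_game :: "('i::finite \<Rightarrow> 'a set) \<Rightarrow> bool" where
  "finite_game As \<longleftrightarrow> (\<forall>i. finite (As i) \<and> As i \<noteq> {})"

definition Theta :: "('i \<Rightarrow> 'a set) \<Rightarrow> ('i,'a) utility set" where
  "Theta As = {u. \<forall>a. a \<notin> profiles As \<longrightarrow> u a = 0}"

definition mixed :: "'a set \<Rightarrow> ('a \<Rightarrow> real) \<Rightarrow> bool" where
  "mixed S s \<longleftrightarrow> (\<forall>x. 0 \<le> s x) \<and> (\<forall>x. x \<notin> S \<longrightarrow> s x = 0) \<and> (\<Sum>x\<in>S. s x) = 1"

definition mixed_profile :: "('i \<Rightarrow> 'a set) \<Rightarrow> ('i \<Rightarrow> 'a \<Rightarrow> real) \<Rightarrow> bool" where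
  "mixed_profile As \<sigma> \<longleftrightarrow> (\<forall>i. mixed (As i) (\<sigma> i))"

definition exp_pay :: "('i::finite \<Rightarrow> 'a set) \<Rightarrow> ('i,'a) utility \<Rightarrow> ('i \<Rightarrow> 'a \<Rightarrow> real) \<Rightarrow> real" where
  "exp_pay As u \<sigma> = (\<Sum>a\<in>profiles As. (\<Prod>j\<in>UNIV. \<sigma> j (a j)) * u a)"

definition corr_pay :: "('i::finite \<Rightarrow> 'a set) \<Rightarrow> ('i,'a) utility \<Rightarrow> (('i \<Rightarrow> 'a) \<Rightarrow> real) \<Rightarrow> real" where
  "corr_pay As u \<phi> = (\<Sum>a\<in>profiles As. \<phi> a * u a)"

definition nash :: "('i::finite \<Rightarrow> 'a set) \<Rightarrow> ('i \<Rightarrow> ('i,'a) utility) \<Rightarrow> ('i \<Rightarrow> 'a \<Rightarrow> real) \<Rightarrow> bool" where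
  "nash As \<theta> \<sigma> \<longleftrightarrow> mixed_profile As \<sigma> \<and>
     (\<forall>i \<tau>. mixed (As i) \<tau> \<longrightarrow> exp_pay As (\<theta> i) (\<sigma>(i := \<tau>)) \<le> exp_pay As (\<theta> i) \<sigma>)"

definition supp :: "(('i,'a) utility \<Rightarrow> real) \<Rightarrow> ('i,'a) utility set" where
  "supp m = {t. m t \<noteq> 0}"

definition distr :: "('i \<Rightarrow> 'a set) \<Rightarrow> (('i,'a) utility \<Rightarrow> real) \<Rightarrow> bool" where
  "distr As m \<longleftrightarrow> (\<forall>t. 0 \<le> m t) \<and> finite (supp m) \<and> supp m \<subseteq> Theta As \<and> (\<Sum>t\<in>supp m. m t) = 1"

definition pop_distr :: "('i \<Rightarrow> 'a set) \<Rightarrow> ('i \<Rightarrow> ('i,'a) utility \<Rightarrow> real) \<Rightarrow> bool" where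
  "pop_distr As \<mu> \<longleftrightarrow> (\<forall>i. distr As (\<mu> i))"

definition supp_prof :: "('i \<Rightarrow> ('i,'a) utility \<Rightarrow> real) \<Rightarrow> ('i \<Rightarrow> ('i,'a) utility) set" where
  "supp_prof \<mu> = PiE UNIV (\<lambda>i. supp (\<mu> i))"

definition B1 :: "('i::finite \<Rightarrow> 'a set) \<Rightarrow> ('i \<Rightarrow> ('i,'a) utility \<Rightarrow> real)
     \<Rightarrow> (('i \<Rightarrow> ('i,'a) utility) \<Rightarrow> ('i \<Rightarrow> 'a \<Rightarrow> real)) set" where
  "B1 As \<mu> = {b. \<forall>\<theta>\<in>supp_prof \<mu>. nash As \<theta> (b \<theta>)}"

definition avg_fit :: "('i::finite \<Rightarrow> 'a set) \<Rightarrow> ('i \<Rightarrow> ('i,'a) utility) \<Rightarrow>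
     ('i \<Rightarrow> ('i,'a) utility \<Rightarrow> real) \<Rightarrow> (('i \<Rightarrow> ('i,'a) utility) \<Rightarrow> ('i \<Rightarrow> 'a \<Rightarrow> real))
     \<Rightarrow> 'i \<Rightarrow> ('i,'a) utility \<Rightarrow> real" where
  "avg_fit As \<pi> \<mu> b i t =
     (\<Sum>\<theta>'\<in>{\<theta>'\<in>supp_prof \<mu>. \<theta>' i = t}. (\<Prod>j\<in>UNIV-{i}. \<mu> j (\<theta>' j)) * exp_pay As (\<pi> i) (b \<theta>'))"

definition aggregate :: "('i::finite \<Rightarrow> ('i,'a) utility \<Rightarrow> real) \<Rightarrow>
     (('i \<Rightarrow> ('i,'a) utility) \<Rightarrow> ('i \<Rightarrow> 'a \<Rightarrow> real)) \<Rightarrow> ('i \<Rightarrow> 'a) \<Rightarrow> real" where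
  "aggregate \<mu> b a = (\<Sum>\<theta>\<in>supp_prof \<mu>. (\<Prod>j\<in>UNIV. \<mu> j (\<theta> j)) * (\<Prod>j\<in>UNIV. b \<theta> j (a j)))"

definition balanced :: "('i::finite \<Rightarrow> 'a set) \<Rightarrow> ('i \<Rightarrow> ('i,'a) utility) \<Rightarrow>
     ('i \<Rightarrow> ('i,'a) utility \<Rightarrow> real) \<Rightarrow> (('i \<Rightarrow> ('i,'a) utility) \<Rightarrow> ('i \<Rightarrow> 'a \<Rightarrow> real)) \<Rightarrow> bool" where
  "balanced As \<pi> \<mu> b \<longleftrightarrow>
     (\<forall>i. \<forall>t\<in>supp (\<mu> i). \<forall>t'\<in>supp (\<mu> i). avg_fit As \<pi> \<mu> b i t = avg_fit As \<pi> \<mu> b i t')"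

definition post_entry :: "('i \<Rightarrow> ('i,'a) utility \<Rightarrow> real) \<Rightarrow> 'i set \<Rightarrow> ('i \<Rightarrow> ('i,'a) utility)
     \<Rightarrow> ('i \<Rightarrow> real) \<Rightarrow> ('i \<Rightarrow> ('i,'a) utility \<Rightarrow> real)" where
  "post_entry \<mu> J \<theta>t \<epsilon> = (\<lambda>i t. if i \<in> J
      then (1 - \<epsilon> i) * \<mu> i t + \<epsilon> i * (if t = \<theta>t i then 1 else 0)
      else \<mu> i t)"

definition stable :: "('i::finite \<Rightarrow> 'a set) \<Rightarrow> ('i \<Rightarrow> ('i,'a) utility) \<Rightarrow>
     ('i \<Rightarrow> ('i,'a) utility \<Rightarrow> real) \<Rightarrow> (('i \<Rightarrow> ('i,'a) utility) \<Rightarrow> ('i \<Rightarrow> 'a \<Rightarrow> real)) \<Rightarrow> bool" where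
  "stable As \<pi> \<mu> b \<longleftrightarrow> balanced As \<pi> \<mu> b \<and>
     (\<forall>J \<theta>t. J \<noteq> {} \<longrightarrow> (\<forall>j\<in>J. \<theta>t j \<in> Theta As \<and> \<theta>t j \<notin> supp (\<mu> j)) \<longrightarrow>
       (\<exists>e\<in>{0<..<1}. \<forall>\<epsilon>. (\<forall>j\<in>J. 0 < \<epsilon> j \<and> \<epsilon> j < e) \<longrightarrow>
          (\<forall>bt. bt \<in> B1 As (post_entry \<mu> J \<theta>t \<epsilon>) \<longrightarrow>
                (\<forall>\<theta>\<in>supp_prof \<mu>. bt \<theta> = b \<theta>) \<longrightarrow>
             (\<exists>j\<in>J. \<forall>t\<in>supp (\<mu> j).
                 avg_fit As \<pi> (post_entry \<mu> J \<theta>t \<epsilon>) bt j t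
                   > avg_fit As \<pi> (post_entry \<mu> J \<theta>t \<epsilon>) bt j (\<theta>t j))
             \<or> balanced As \<pi> (post_entry \<mu> J \<theta>t \<epsilon>) bt)))"

end

theory Submission
  imports Defs
begin

text \<open>Types with constant utility are indifferent between all outcomes, so in the focal
  set a mutant of such a type may be assigned any behaviour, in particular that of an
  incumbent type. Let an indifferent mutant of player i always play like the incumbent type
  that is best for i against the current opponents. It then earns at least as much as every
  incumbent of i. Stability leaves only one option for a mutant that is not strictly
  outperformed: the post-entry configuration is balanced. So the mutant earns exactly as
  much as the incumbents, and hence every incumbent type of i is already best for i:
  i's payoff does not depend on i's own type.
  Adding a second indifferent mutant, for j, which favours i only when matched with the
  i-mutant (harmlessly for itself, by the first step), shows in the same way that i's
  payoff does not depend on j's type either. So each payoff is constant on the support of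
  \<mu>, and both the average fitness and the payoff of the aggregate outcome, being
  averages of it, equal that constant.\<close>

lemma arg_max_on_if_finite:
  fixes f :: "'b \<Rightarrow> 'c::linorder"
  assumes "finite S" "S \<noteq> {}"
  shows "arg_max_on f S \<in> S" and "\<forall>y\<in>S. f y \<le> f (arg_max_on f S)"
proof -
  have "Max (f ` S) \<in> f ` S" using assms by (intro Max_in) auto
  then obtain x where "x \<in> S" "f x = Max (f ` S)" by auto
  then have "is_arg_max f (\<lambda>x. x \<in> S) x" using assms by (simp add: is_arg_max_linorder)
  then have "is_arg_max f (\<lambda>x. x \<in> S) (arg_max_on f S)"
    unfolding arg_max_on_def arg_max_def by (rule someI[where P="is_arg_max f (\<lambda>x. x \<in> S)"])
  then show "arg_max_on f S \<in> S" "\<forall>y\<in>S. f y \<le> f (arg_max_on f S)"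
    by (simp_all add: is_arg_max_linorder)
qed

lemma sum_PiE_prod_eq_1:
  fixes f :: "'i::finite \<Rightarrow> 'b \<Rightarrow> real"
  assumes "\<And>i. finite (B i)" and "\<And>i. (\<Sum>y\<in>B i. f i y) = 1"
  shows "(\<Sum>g\<in>PiE UNIV B. \<Prod>i\<in>UNIV. f i (g i)) = 1"
  using prod_sum_PiE[of UNIV B f] assms by simp

lemma weighted_sum_eq_of_le:
  fixes f g w :: "'b \<Rightarrow> real"
  assumes "finite S" and "\<forall>x\<in>S. 0 < w x" and "\<forall>x\<in>S. f x \<le> g x"
    and "(\<Sum>x\<in>S. w x * g x) \<le> (\<Sum>x\<in>S. w x * f x)"
  shows "\<forall>x\<in>S. f x = g x"
proof (rule ccontr)
  assume "\<not> (\<forall>x\<in>S. f x = g x)"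
  then obtain a where "a \<in> S" "f a < g a" using assms(3) by force
  then have "(\<Sum>x\<in>S. w x * f x) < (\<Sum>x\<in>S. w x * g x)"
    using assms(1-3) by (intro sum_strict_mono_ex1) (auto intro!: mult_left_mono)
  then show False using assms(4) by linarith
qed

lemma PiE_UNIV_eq_of_update_invariant:
  fixes G :: "('i::finite \<Rightarrow> 'b) \<Rightarrow> 'c"
  assumes inv: "\<And>\<theta> k x. \<theta> \<in> PiE UNIV A \<Longrightarrow> x \<in> A k \<Longrightarrow> G (\<theta>(k := x)) = G \<theta>"
    and "\<theta> \<in> PiE UNIV A" and \<theta>': "\<theta>' \<in> PiE UNIV A"
  shows "G \<theta> = G \<theta>'"
proof -
  have "\<forall>\<theta>\<in>PiE UNIV A. {k. \<theta> k \<noteq> \<theta>' k} \<subseteq> D \<longrightarrow> G \<theta> = G \<theta>'" if "finite D" for D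
    using that
  proof (induction D rule: finite_induct)
    case empty
    show ?case by (auto intro: ext)
  next
    case (insert k D)
    show ?case
    proof (intro ballI impI)
      fix \<theta> assume \<theta>: "\<theta> \<in> PiE UNIV A" and diff: "{k'. \<theta> k' \<noteq> \<theta>' k'} \<subseteq> insert k D"
      have "\<theta>' k \<in> A k" using \<theta>' by (auto simp: PiE_iff)
      then have "\<theta>(k := \<theta>' k) \<in> PiE UNIV A" and "G (\<theta>(k := \<theta>' k)) = G \<theta>"
        using \<theta> inv by (auto simp: PiE_iff)
      moreover have "{k'. (\<theta>(k := \<theta>' k)) k' \<noteq> \<theta>' k'} \<subseteq> D" using diff by auto
      ultimately show "G \<theta> = G \<theta>'" using insert.IH by auto
    qed
  qed
  from this[OF finite_UNIV] assms(2) show ?thesis by blast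
qed

definition indifferent_type :: "('i \<Rightarrow> 'a set) \<Rightarrow> real \<Rightarrow> ('i,'a) utility" where
  "indifferent_type As r = (\<lambda>a. if a \<in> profiles As then r else 0)"

lemma indifferent_type_in_Theta: "indifferent_type As r \<in> Theta As"
  by (simp add: indifferent_type_def Theta_def)

lemma mixed_profile_sum_prod:
  assumes "finite_game As" "mixed_profile As \<sigma>"
  shows "(\<Sum>a\<in>profiles As. \<Prod>j\<in>UNIV. \<sigma> j (a j)) = 1"
  unfolding profiles_def using assms
  by (intro sum_PiE_prod_eq_1) (auto simp: finite_game_def mixed_profile_def mixed_def)

lemma exp_pay_indifferent_type:
  assumes "finite_game As" "mixed_profile As \<sigma>"
  shows "exp_pay As (indifferent_type As r) \<sigma> = r"
proof -
  have "exp_pay As (indifferent_type As r) \<sigma> = (\<Sum>a\<in>profiles As. \<Prod>j\<in>UNIV. \<sigma> j (a j)) * r"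
    unfolding exp_pay_def indifferent_type_def sum_distrib_right by (rule sum.cong) auto
  then show ?thesis using mixed_profile_sum_prod[OF assms] by simp
qed

lemma exists_fresh_indifferent_type:
  assumes "finite_game As" and "finite T"
  shows "\<exists>r. indifferent_type As r \<notin> T"
proof -
  have "profiles As \<noteq> {}"
    using assms(1) by (simp add: profiles_def finite_game_def PiE_eq_empty_iff)
  then obtain a where a: "a \<in> profiles As" by blast
  obtain r :: real where "r \<notin> (\<lambda>u. u a) ` T"
    using ex_new_if_finite[OF infinite_UNIV_char_0] assms(2) by blast
  then have "indifferent_type As r \<notin> T"
    using a image_eqI[of r "\<lambda>u. u a" "indifferent_type As r" T] by (auto simp: indifferent_type_def)
  then show ?thesis ..
qed

lemma nash_replace_indifferent:
  assumes fg: "finite_game As" and nash: "nash As \<theta> \<sigma>"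
    and repl: "\<forall>k. \<theta>' k = \<theta> k \<or> \<theta>' k \<in> range (indifferent_type As)"
  shows "nash As \<theta>' \<sigma>"
  unfolding nash_def
proof (intro conjI allI impI)
  show \<sigma>: "mixed_profile As \<sigma>" using nash by (simp add: nash_def)
  fix i \<tau> assume \<tau>: "mixed (As i) \<tau>"
  then have \<sigma>\<tau>: "mixed_profile As (\<sigma>(i := \<tau>))" using \<sigma> by (simp add: mixed_profile_def)
  show "exp_pay As (\<theta>' i) (\<sigma>(i := \<tau>)) \<le> exp_pay As (\<theta>' i) \<sigma>"
    using repl[rule_format, of i] nash \<tau> exp_pay_indifferent_type[OF fg \<sigma>] exp_pay_indifferent_type[OF fg \<sigma>\<tau>]
    by (auto simp: nash_def)
qed

lemma pop_distrD:
  assumes "pop_distr As \<mu>"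
  shows "0 \<le> \<mu> k x" and "finite (supp (\<mu> k))" and "supp (\<mu> k) \<noteq> {}"
proof -
  have "distr As (\<mu> k)" using assms by (simp add: pop_distr_def)
  then show "0 \<le> \<mu> k x" "finite (supp (\<mu> k))" "supp (\<mu> k) \<noteq> {}"
    unfolding distr_def by auto
qed

lemma mem_supp_prof: "\<theta> \<in> supp_prof \<mu> \<longleftrightarrow> (\<forall>k. \<theta> k \<in> supp (\<mu> k))"
  by (simp add: supp_prof_def PiE_iff)

lemma finite_supp_prof:
  fixes \<mu> :: "'i::finite \<Rightarrow> ('i,'a) utility \<Rightarrow> real"
  shows "(\<And>k. finite (supp (\<mu> k))) \<Longrightarrow> finite (supp_prof \<mu>)"
  unfolding supp_prof_def by (intro finite_PiE) auto

lemma prod_supp_prof_pos: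
  assumes "\<And>k x. 0 \<le> \<mu> k x" and "\<theta> \<in> supp_prof \<mu>"
  shows "0 < (\<Prod>j\<in>I. \<mu> j (\<theta> j))"
  using assms by (intro prod_pos) (force simp: mem_supp_prof supp_def order_le_less)

lemma sum_supp_prof_prod_eq_1:
  fixes \<mu> :: "'i::finite \<Rightarrow> ('i,'a) utility \<Rightarrow> real"
  assumes "pop_distr As \<mu>"
  shows "(\<Sum>\<theta>\<in>supp_prof \<mu>. \<Prod>j\<in>UNIV. \<mu> j (\<theta> j)) = 1"
  unfolding supp_prof_def using assms pop_distrD(2)[OF assms]
  by (intro sum_PiE_prod_eq_1) (auto simp: pop_distr_def distr_def)

lemma sum_supp_prof_fixed_prod_eq_1:
  fixes \<mu> :: "'i::finite \<Rightarrow> ('i,'a) utility \<Rightarrow> real"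
  assumes pd: "pop_distr As \<mu>" and t: "t \<in> supp (\<mu> i)"
  shows "(\<Sum>\<theta>\<in>{\<theta>\<in>supp_prof \<mu>. \<theta> i = t}. \<Prod>j\<in>UNIV-{i}. \<mu> j (\<theta> j)) = 1"
proof -
  define B where "B = (\<lambda>k. supp (\<mu> k))(i := {t})"
  define f where "f = \<mu>(i := \<lambda>_. 1)"
  have "{\<theta>\<in>supp_prof \<mu>. \<theta> i = t} = PiE UNIV B"
    using t by (auto simp: mem_supp_prof PiE_iff B_def split: if_splits)
  moreover have "(\<Prod>j\<in>UNIV-{i}. \<mu> j (\<theta> j)) = (\<Prod>j\<in>UNIV. f j (\<theta> j))" for \<theta>
    by (simp add: prod.remove[of UNIV i] f_def)
  moreover have "(\<Sum>\<theta>\<in>PiE UNIV B. \<Prod>j\<in>UNIV. f j (\<theta> j)) = 1"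
    using pd pop_distrD(2)[OF pd]
    by (intro sum_PiE_prod_eq_1) (auto simp: B_def f_def pop_distr_def distr_def)
  ultimately show ?thesis by simp
qed

lemma supp_post_entry:
  assumes "pop_distr As \<mu>" and "\<forall>j\<in>J. 0 < \<epsilon> j \<and> \<epsilon> j < 1" and "\<forall>j\<in>J. c j \<notin> supp (\<mu> j)"
  shows "supp (post_entry \<mu> J c \<epsilon> k) = (if k \<in> J then insert (c k) (supp (\<mu> k)) else supp (\<mu> k))"
proof (cases "k \<in> J")
  case True
  then have "0 < \<epsilon> k" "\<epsilon> k < 1" "\<mu> k (c k) = 0" using assms(2,3) by (auto simp: supp_def)
  moreover have "0 \<le> \<mu> k x" for x using pop_distrD(1)[OF assms(1)] .
  ultimately show ?thesis
    using True by (auto simp: supp_def post_entry_def add_nonneg_eq_0_iff)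
qed (simp add: supp_def post_entry_def)

lemma post_entry_nonneg:
  assumes "pop_distr As \<mu>" and "\<forall>j\<in>J. 0 < \<epsilon> j \<and> \<epsilon> j < 1"
  shows "0 \<le> post_entry \<mu> J c \<epsilon> k x"
  using assms pop_distrD(1)[OF assms(1)] by (auto simp: post_entry_def)

lemma avg_fit_reindex_type:
  assumes "c \<in> supp (\<mu> i)" and "t \<in> supp (\<mu> i)"
  shows "avg_fit As \<pi> \<mu> b i t = (\<Sum>\<theta>\<in>{\<theta>\<in>supp_prof \<mu>. \<theta> i = c}.
      (\<Prod>j\<in>UNIV-{i}. \<mu> j (\<theta> j)) * exp_pay As (\<pi> i) (b (\<theta>(i := t))))"
proof -
  have "bij_betw (\<lambda>\<theta>. \<theta>(i := t)) {\<theta>\<in>supp_prof \<mu>. \<theta> i = c} {\<theta>\<in>supp_prof \<mu>. \<theta> i = t}"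
    by (rule bij_betwI[where g = "\<lambda>\<theta>. \<theta>(i := c)"]) (use assms in \<open>auto simp: mem_supp_prof\<close>)
  then show ?thesis
    unfolding avg_fit_def by (subst sum.reindex_bij_betw[symmetric]) (auto intro!: sum.cong prod.cong)
qed

context
  fixes As :: "'i::finite \<Rightarrow> 'a set" and \<pi> :: "'i \<Rightarrow> ('i,'a) utility"
    and \<mu> :: "'i \<Rightarrow> ('i,'a) utility \<Rightarrow> real"
    and b :: "('i \<Rightarrow> ('i,'a) utility) \<Rightarrow> ('i \<Rightarrow> 'a \<Rightarrow> real)" and i c t
  assumes nonneg: "\<And>k x. 0 \<le> \<mu> k x" and fin: "\<And>k. finite (supp (\<mu> k))"
    and c: "c \<in> supp (\<mu> i)" and t: "t \<in> supp (\<mu> i)"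
    and le: "\<forall>\<theta>\<in>supp_prof \<mu>. \<theta> i = c \<longrightarrow>
               exp_pay As (\<pi> i) (b (\<theta>(i := t))) \<le> exp_pay As (\<pi> i) (b \<theta>)"
begin

lemma avg_fit_le_of_payoff_le: "avg_fit As \<pi> \<mu> b i t \<le> avg_fit As \<pi> \<mu> b i c"
  unfolding avg_fit_reindex_type[of c \<mu> i t, OF c t] unfolding avg_fit_def
  using le prod_supp_prof_pos[of \<mu>, OF nonneg] by (intro sum_mono mult_left_mono) (auto intro: less_imp_le)

lemma payoff_eq_of_avg_fit_le:
  assumes "avg_fit As \<pi> \<mu> b i c \<le> avg_fit As \<pi> \<mu> b i t"
  shows "\<forall>\<theta>\<in>supp_prof \<mu>. \<theta> i = c \<longrightarrow>
           exp_pay As (\<pi> i) (b (\<theta>(i := t))) = exp_pay As (\<pi> i) (b \<theta>)"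
proof -
  let ?S = "{\<theta>\<in>supp_prof \<mu>. \<theta> i = c}" and ?w = "\<lambda>\<theta>. \<Prod>j\<in>UNIV-{i}. \<mu> j (\<theta> j)"
  have "finite ?S" using finite_supp_prof[OF fin] by simp
  moreover have "\<forall>\<theta>\<in>?S. 0 < ?w \<theta>" using prod_supp_prof_pos[of \<mu>, OF nonneg] by blast
  moreover have "\<forall>\<theta>\<in>?S. exp_pay As (\<pi> i) (b (\<theta>(i := t))) \<le> exp_pay As (\<pi> i) (b \<theta>)"
    using le by blast
  moreover have "avg_fit As \<pi> \<mu> b i c = (\<Sum>\<theta>\<in>?S. ?w \<theta> * exp_pay As (\<pi> i) (b \<theta>))"
    by (simp only: avg_fit_def)
  with assms avg_fit_reindex_type[of c \<mu> i t As \<pi> b, OF c t]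
  have "(\<Sum>\<theta>\<in>?S. ?w \<theta> * exp_pay As (\<pi> i) (b \<theta>))
      \<le> (\<Sum>\<theta>\<in>?S. ?w \<theta> * exp_pay As (\<pi> i) (b (\<theta>(i := t))))"
    by linarith
  ultimately have "\<forall>\<theta>\<in>?S. exp_pay As (\<pi> i) (b (\<theta>(i := t))) = exp_pay As (\<pi> i) (b \<theta>)"
    by (rule weighted_sum_eq_of_le)
  then show ?thesis by blast
qed

lemma payoff_eq_of_balanced:
  assumes "balanced As \<pi> \<mu> b"
  shows "\<forall>\<theta>\<in>supp_prof \<mu>. \<theta> i = c \<longrightarrow>
           exp_pay As (\<pi> i) (b (\<theta>(i := t))) = exp_pay As (\<pi> i) (b \<theta>)"
proof (rule payoff_eq_of_avg_fit_le)
  show "avg_fit As \<pi> \<mu> b i c \<le> avg_fit As \<pi> \<mu> b i t"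
    using assms c t unfolding balanced_def by (metis order_refl)
qed

end

lemma avg_fit_eq_of_payoff_eq:
  assumes "c \<in> supp (\<mu> i)" and "t \<in> supp (\<mu> i)"
    and "\<forall>\<theta>\<in>supp_prof \<mu>. \<theta> i = c \<longrightarrow>
           exp_pay As (\<pi> i) (b (\<theta>(i := t))) = exp_pay As (\<pi> i) (b \<theta>)"
  shows "avg_fit As \<pi> \<mu> b i t = avg_fit As \<pi> \<mu> b i c"
  unfolding avg_fit_reindex_type[of c \<mu> i t, OF assms(1,2)] unfolding avg_fit_def
  using assms(3) by (intro sum.cong) auto

lemma avg_fit_const_payoff:
  assumes "pop_distr As \<mu>" and "t \<in> supp (\<mu> i)"
    and "\<forall>\<theta>\<in>supp_prof \<mu>. exp_pay As (\<pi> i) (b \<theta>) = v"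
  shows "avg_fit As \<pi> \<mu> b i t = v"
proof -
  have "avg_fit As \<pi> \<mu> b i t = (\<Sum>\<theta>\<in>{\<theta>\<in>supp_prof \<mu>. \<theta> i = t}. \<Prod>j\<in>UNIV-{i}. \<mu> j (\<theta> j)) * v"
    unfolding avg_fit_def sum_distrib_right using assms(3) by (intro sum.cong) auto
  then show ?thesis using sum_supp_prof_fixed_prod_eq_1[OF assms(1,2)] by simp
qed

lemma corr_pay_aggregate:
  "corr_pay As u (aggregate \<mu> b) =
     (\<Sum>\<theta>\<in>supp_prof \<mu>. (\<Prod>j\<in>UNIV. \<mu> j (\<theta> j)) * exp_pay As u (b \<theta>))"
proof -
  have "corr_pay As u (aggregate \<mu> b) = (\<Sum>a\<in>profiles As. \<Sum>\<theta>\<in>supp_prof \<mu>.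
      (\<Prod>j\<in>UNIV. \<mu> j (\<theta> j)) * ((\<Prod>j\<in>UNIV. b \<theta> j (a j)) * u a))"
    unfolding corr_pay_def aggregate_def sum_distrib_right by (simp only: mult.assoc)
  also have "\<dots> = (\<Sum>\<theta>\<in>supp_prof \<mu>. \<Sum>a\<in>profiles As.
      (\<Prod>j\<in>UNIV. \<mu> j (\<theta> j)) * ((\<Prod>j\<in>UNIV. b \<theta> j (a j)) * u a))"
    by (rule sum.swap)
  also have "\<dots> = (\<Sum>\<theta>\<in>supp_prof \<mu>. (\<Prod>j\<in>UNIV. \<mu> j (\<theta> j)) * exp_pay As u (b \<theta>))"
    unfolding exp_pay_def sum_distrib_left ..
  finally show ?thesis .
qed

text \<open>Indifferent mutants who, in every match \<theta>, play as in the incumbent match R \<theta>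
  give an equilibrium in the focal set, so stability applies to them.\<close>
lemma stable_against_mimics:
  fixes As :: "'i::finite \<Rightarrow> 'a set" and J :: "'i set"
    and R :: "('i \<Rightarrow> ('i,'a) utility) \<Rightarrow> ('i \<Rightarrow> ('i,'a) utility)"
  assumes fg: "finite_game As" and pd: "pop_distr As \<mu>" and b: "b \<in> B1 As \<mu>"
    and st: "stable As \<pi> \<mu> b" and J: "J \<noteq> {}"
    and fresh: "\<forall>j\<in>J. c j \<in> range (indifferent_type As) \<and> c j \<notin> supp (\<mu> j)"
    and R_supp: "\<And>\<theta>. \<forall>k. \<theta> k \<in> supp (\<mu> k) \<or> k \<in> J \<and> \<theta> k = c k \<Longrightarrow>
        R \<theta> \<in> supp_prof \<mu> \<and> (\<forall>k. R \<theta> k = \<theta> k \<or> k \<in> J \<and> \<theta> k = c k)"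
    and R_id: "\<And>\<theta>. \<theta> \<in> supp_prof \<mu> \<Longrightarrow> R \<theta> = \<theta>"
  obtains \<epsilon> where "\<forall>j\<in>J. 0 < \<epsilon> j \<and> \<epsilon> j < 1"
    and "\<forall>j\<in>J. \<exists>t\<in>supp (\<mu> j).
            avg_fit As \<pi> (post_entry \<mu> J c \<epsilon>) (\<lambda>\<theta>. b (R \<theta>)) j t
              \<le> avg_fit As \<pi> (post_entry \<mu> J c \<epsilon>) (\<lambda>\<theta>. b (R \<theta>)) j (c j) \<Longrightarrow>
          balanced As \<pi> (post_entry \<mu> J c \<epsilon>) (\<lambda>\<theta>. b (R \<theta>))"
proof -
  have equilibrium: "(\<lambda>\<theta>. b (R \<theta>)) \<in> B1 As (post_entry \<mu> J c \<epsilon>)"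
    if \<epsilon>: "\<forall>j\<in>J. 0 < \<epsilon> j \<and> \<epsilon> j < 1" for \<epsilon>
    unfolding B1_def
  proof (intro CollectI ballI)
    fix \<theta> assume "\<theta> \<in> supp_prof (post_entry \<mu> J c \<epsilon>)"
    then have "\<forall>k. \<theta> k \<in> supp (\<mu> k) \<or> k \<in> J \<and> \<theta> k = c k"
      using supp_post_entry[OF pd \<epsilon>] fresh by (auto simp: mem_supp_prof split: if_splits)
    note R\<theta> = R_supp[OF this]
    have "nash As (R \<theta>) (b (R \<theta>))" using R\<theta> b by (simp add: B1_def)
    moreover have "\<forall>k. \<theta> k = R \<theta> k \<or> \<theta> k \<in> range (indifferent_type As)"
    proof
      fix k
      have "R \<theta> k = \<theta> k \<or> k \<in> J \<and> \<theta> k = c k" using R\<theta> by blast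
      then show "\<theta> k = R \<theta> k \<or> \<theta> k \<in> range (indifferent_type As)" using fresh by auto
    qed
    ultimately show "nash As \<theta> (b (R \<theta>))" by (rule nash_replace_indifferent[OF fg])
  qed
  have mutants: "\<forall>j\<in>J. c j \<in> Theta As \<and> c j \<notin> supp (\<mu> j)"
    using fresh by (auto simp: indifferent_type_in_Theta)
  from st[unfolded stable_def, THEN conjunct2, rule_format, OF J mutants[rule_format]]
  obtain e where e: "e \<in> {0<..<1}" and invasion: "\<forall>\<epsilon>. (\<forall>j\<in>J. 0 < \<epsilon> j \<and> \<epsilon> j < e) \<longrightarrow>
      (\<forall>bt. bt \<in> B1 As (post_entry \<mu> J c \<epsilon>) \<longrightarrow> (\<forall>\<theta>\<in>supp_prof \<mu>. bt \<theta> = b \<theta>) \<longrightarrow>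
         (\<exists>j\<in>J. \<forall>t\<in>supp (\<mu> j).
            avg_fit As \<pi> (post_entry \<mu> J c \<epsilon>) bt j t > avg_fit As \<pi> (post_entry \<mu> J c \<epsilon>) bt j (c j))
         \<or> balanced As \<pi> (post_entry \<mu> J c \<epsilon>) bt)"
    by blast
  define \<epsilon> :: "'i \<Rightarrow> real" where "\<epsilon> = (\<lambda>_. e / 2)"
  have \<epsilon>: "\<forall>j\<in>J. 0 < \<epsilon> j \<and> \<epsilon> j < e" "\<forall>j\<in>J. 0 < \<epsilon> j \<and> \<epsilon> j < 1"
    using e by (auto simp: \<epsilon>_def)
  have agree: "b (R \<theta>) = b \<theta>" if "\<theta> \<in> supp_prof \<mu>" for \<theta> using R_id[OF that] by simp
  from invasion[rule_format, OF \<epsilon>(1)[rule_format] equilibrium[OF \<epsilon>(2)] agree]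
  have "(\<exists>j\<in>J. \<forall>t\<in>supp (\<mu> j).
            avg_fit As \<pi> (post_entry \<mu> J c \<epsilon>) (\<lambda>\<theta>. b (R \<theta>)) j t
              > avg_fit As \<pi> (post_entry \<mu> J c \<epsilon>) (\<lambda>\<theta>. b (R \<theta>)) j (c j))
         \<or> balanced As \<pi> (post_entry \<mu> J c \<epsilon>) (\<lambda>\<theta>. b (R \<theta>))"
    by simp
  then show thesis by (intro that[OF \<epsilon>(2)]) (meson leD)
qed

lemma own_payoff_le:
  fixes As :: "'i::finite \<Rightarrow> 'a set"
  assumes fg: "finite_game As" and pd: "pop_distr As \<mu>" and b: "b \<in> B1 As \<mu>"
    and st: "stable As \<pi> \<mu> b" and \<theta>1: "\<theta>1 \<in> supp_prof \<mu>" and s: "s \<in> supp (\<mu> i)"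
  shows "exp_pay As (\<pi> i) (b (\<theta>1(i := s))) \<le> exp_pay As (\<pi> i) (b \<theta>1)"
proof -
  define F where "F \<theta> = exp_pay As (\<pi> i) (b \<theta>)" for \<theta>
  obtain r where c_fresh: "indifferent_type As r \<notin> supp (\<mu> i)"
    using exists_fresh_indifferent_type[OF fg pop_distrD(2)[OF pd]] by blast
  define c where "c = indifferent_type As r"
  have c: "c \<notin> supp (\<mu> i)" using c_fresh by (simp add: c_def)
  define best where "best \<theta> = arg_max_on (\<lambda>x. F (\<theta>(i := x))) (supp (\<mu> i))" for \<theta>
  have best: "best \<theta> \<in> supp (\<mu> i)" "\<forall>y\<in>supp (\<mu> i). F (\<theta>(i := y)) \<le> F (\<theta>(i := best \<theta>))" for \<theta>
    unfolding best_def by (rule arg_max_on_if_finite[OF pop_distrD(2,3)[OF pd]])+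
  define R where "R \<theta> = (if \<theta> i = c then \<theta>(i := best \<theta>) else \<theta>)" for \<theta>
  obtain \<epsilon> where \<epsilon>: "\<forall>j\<in>{i}. 0 < \<epsilon> j \<and> \<epsilon> j < 1"
    and balanced_if: "\<forall>j\<in>{i}. \<exists>t\<in>supp (\<mu> j).
            avg_fit As \<pi> (post_entry \<mu> {i} (\<lambda>_. c) \<epsilon>) (\<lambda>\<theta>. b (R \<theta>)) j t
              \<le> avg_fit As \<pi> (post_entry \<mu> {i} (\<lambda>_. c) \<epsilon>) (\<lambda>\<theta>. b (R \<theta>)) j c \<Longrightarrow>
          balanced As \<pi> (post_entry \<mu> {i} (\<lambda>_. c) \<epsilon>) (\<lambda>\<theta>. b (R \<theta>))"
  proof (rule stable_against_mimics[OF fg pd b st, of "{i}" "\<lambda>_. c" R])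
    show "R \<theta> \<in> supp_prof \<mu> \<and> (\<forall>k. R \<theta> k = \<theta> k \<or> k \<in> {i} \<and> \<theta> k = c)"
      if "\<forall>k. \<theta> k \<in> supp (\<mu> k) \<or> k \<in> {i} \<and> \<theta> k = c" for \<theta>
      using that best(1) by (auto simp: R_def mem_supp_prof)
    show "R \<theta> = \<theta>" if "\<theta> \<in> supp_prof \<mu>" for \<theta>
      using that c by (auto simp: R_def mem_supp_prof)
  qed (use c c_def in auto)
  let ?\<mu>' = "post_entry \<mu> {i} (\<lambda>_. c) \<epsilon>" and ?bt = "\<lambda>\<theta>. b (R \<theta>)"
  have supp': "supp (?\<mu>' k) = (if k = i then insert c (supp (\<mu> k)) else supp (\<mu> k))" for k
    using supp_post_entry[OF pd \<epsilon>] c by simp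
  have nonneg': "0 \<le> ?\<mu>' k x" and fin': "finite (supp (?\<mu>' k))" for k x
    using post_entry_nonneg[OF pd \<epsilon>] supp' pop_distrD(2)[OF pd] by simp_all
  define t where "t = \<theta>1 i"
  have t: "t \<in> supp (\<mu> i)" using \<theta>1 by (simp add: mem_supp_prof t_def)
  have c': "c \<in> supp (?\<mu>' i)" and t': "t \<in> supp (?\<mu>' i)" using supp' t by auto
  have le: "\<forall>\<theta>\<in>supp_prof ?\<mu>'. \<theta> i = c \<longrightarrow>
      exp_pay As (\<pi> i) (?bt (\<theta>(i := t))) \<le> exp_pay As (\<pi> i) (?bt \<theta>)"
    using best(2) t c by (auto simp: R_def F_def)
  have "avg_fit As \<pi> ?\<mu>' ?bt i t \<le> avg_fit As \<pi> ?\<mu>' ?bt i c"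
    using nonneg' fin' c' t' le by (rule avg_fit_le_of_payoff_le)
  with t have "\<forall>j\<in>{i}. \<exists>u\<in>supp (\<mu> j). avg_fit As \<pi> ?\<mu>' ?bt j u \<le> avg_fit As \<pi> ?\<mu>' ?bt j c"
    by auto
  then have "balanced As \<pi> ?\<mu>' ?bt" by (rule balanced_if)
  with nonneg' fin' c' t' le have eq: "\<forall>\<theta>\<in>supp_prof ?\<mu>'. \<theta> i = c \<longrightarrow>
      exp_pay As (\<pi> i) (?bt (\<theta>(i := t))) = exp_pay As (\<pi> i) (?bt \<theta>)"
    by (rule payoff_eq_of_balanced)
  have "\<theta>1(i := c) \<in> supp_prof ?\<mu>'" using \<theta>1 supp' by (auto simp: mem_supp_prof)
  then have "exp_pay As (\<pi> i) (?bt (\<theta>1(i := t))) = exp_pay As (\<pi> i) (?bt (\<theta>1(i := c)))"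
    using eq[rule_format, of "\<theta>1(i := c)"] by simp
  moreover have "\<theta>1 i \<noteq> c" using t c unfolding t_def by blast
  ultimately have "F \<theta>1 = F (\<theta>1(i := best (\<theta>1(i := c))))"
    by (simp add: R_def F_def t_def)
  moreover have "F (\<theta>1(i := s)) \<le> F (\<theta>1(i := best (\<theta>1(i := c))))"
    using best(2)[of "\<theta>1(i := c)"] s by simp
  ultimately show ?thesis unfolding F_def by linarith
qed

lemma own_payoff_invariant:
  fixes As :: "'i::finite \<Rightarrow> 'a set"
  assumes "finite_game As" "pop_distr As \<mu>" "b \<in> B1 As \<mu>" "stable As \<pi> \<mu> b"
    and \<theta>: "\<theta> \<in> supp_prof \<mu>" and s: "s \<in> supp (\<mu> i)"
  shows "exp_pay As (\<pi> i) (b (\<theta>(i := s))) = exp_pay As (\<pi> i) (b \<theta>)"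
proof -
  have "\<theta>(i := s) \<in> supp_prof \<mu>" "\<theta> i \<in> supp (\<mu> i)" using \<theta> s by (auto simp: mem_supp_prof)
  from own_payoff_le[OF assms(1-4) this]
  have "exp_pay As (\<pi> i) (b \<theta>) \<le> exp_pay As (\<pi> i) (b (\<theta>(i := s)))" by simp
  with own_payoff_le[OF assms(1-4) \<theta> s] show ?thesis by simp
qed

text \<open>Two indifferent mutants, of players i and j. The i-mutant always mimics the
  incumbent type t = \<theta>1 i. The j-mutant mimics \<theta>1 j, except against the i-mutant, where it
  mimics the incumbent type of j best for i; by own-payoff invariance this does not change
  its own fitness. So the i-mutant can only gain from the j-mutant, and stability forces
  this gain to vanish.\<close>
lemma other_payoff_le:
  fixes As :: "'i::finite \<Rightarrow> 'a set"
  assumes fg: "finite_game As" and pd: "pop_distr As \<mu>" and b: "b \<in> B1 As \<mu>"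
    and st: "stable As \<pi> \<mu> b" and ij: "i \<noteq> j"
    and \<theta>1: "\<theta>1 \<in> supp_prof \<mu>" and s: "s \<in> supp (\<mu> j)"
  shows "exp_pay As (\<pi> i) (b (\<theta>1(j := s))) \<le> exp_pay As (\<pi> i) (b \<theta>1)"
proof -
  define F where "F \<theta> = exp_pay As (\<pi> i) (b \<theta>)" for \<theta>
  obtain ri where ri: "indifferent_type As ri \<notin> supp (\<mu> i)"
    using exists_fresh_indifferent_type[OF fg pop_distrD(2)[OF pd]] by blast
  obtain rj where rj: "indifferent_type As rj \<notin> supp (\<mu> j)"
    using exists_fresh_indifferent_type[OF fg pop_distrD(2)[OF pd]] by blast
  define c where "c = (\<lambda>_. indifferent_type As rj)(i := indifferent_type As ri)"
  have ci: "c i \<notin> supp (\<mu> i)" and cj: "c j \<notin> supp (\<mu> j)" using ri rj ij by (simp_all add: c_def)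
  define t where "t = \<theta>1 i"
  define sj where "sj = \<theta>1 j"
  have t: "t \<in> supp (\<mu> i)" and sj: "sj \<in> supp (\<mu> j)"
    using \<theta>1 by (simp_all add: mem_supp_prof t_def sj_def)
  have tc: "t \<noteq> c i" and sc: "sj \<noteq> c j" using t sj ci cj by auto
  define best where "best \<theta> = arg_max_on (\<lambda>y. F (\<theta>(j := y))) (supp (\<mu> j))" for \<theta>
  have best: "best \<theta> \<in> supp (\<mu> j)" "\<forall>y\<in>supp (\<mu> j). F (\<theta>(j := y)) \<le> F (\<theta>(j := best \<theta>))" for \<theta>
    unfolding best_def by (rule arg_max_on_if_finite[OF pop_distrD(2,3)[OF pd]])+
  define R where "R \<theta> =
     (if \<theta> i = c i then (if \<theta> j = c j then \<theta>(i := t, j := best (\<theta>(i := t))) else \<theta>(i := t))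
      else (if \<theta> j = c j then \<theta>(j := sj) else \<theta>))" for \<theta>
  obtain \<epsilon> where \<epsilon>: "\<forall>k\<in>{i, j}. 0 < \<epsilon> k \<and> \<epsilon> k < 1"
    and balanced_if: "\<forall>k\<in>{i, j}. \<exists>u\<in>supp (\<mu> k).
            avg_fit As \<pi> (post_entry \<mu> {i, j} c \<epsilon>) (\<lambda>\<theta>. b (R \<theta>)) k u
              \<le> avg_fit As \<pi> (post_entry \<mu> {i, j} c \<epsilon>) (\<lambda>\<theta>. b (R \<theta>)) k (c k) \<Longrightarrow>
          balanced As \<pi> (post_entry \<mu> {i, j} c \<epsilon>) (\<lambda>\<theta>. b (R \<theta>))"
  proof (rule stable_against_mimics[OF fg pd b st, of "{i, j}" c R])
    show "R \<theta> \<in> supp_prof \<mu> \<and> (\<forall>k. R \<theta> k = \<theta> k \<or> k \<in> {i, j} \<and> \<theta> k = c k)"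
      if "\<forall>k. \<theta> k \<in> supp (\<mu> k) \<or> k \<in> {i, j} \<and> \<theta> k = c k" for \<theta>
      using that best(1) t sj ij by (auto simp: R_def mem_supp_prof)
    show "R \<theta> = \<theta>" if "\<theta> \<in> supp_prof \<mu>" for \<theta>
    proof -
      have "\<theta> i \<noteq> c i" "\<theta> j \<noteq> c j" using that ci cj unfolding mem_supp_prof by metis+
      then show ?thesis by (simp add: R_def)
    qed
  qed (use ci cj in \<open>auto simp: c_def\<close>)
  let ?\<mu>' = "post_entry \<mu> {i, j} c \<epsilon>" and ?bt = "\<lambda>\<theta>. b (R \<theta>)"
  have supp': "supp (?\<mu>' k) = (if k \<in> {i, j} then insert (c k) (supp (\<mu> k)) else supp (\<mu> k))" for k
    using supp_post_entry[OF pd \<epsilon>] ci cj by simp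
  have nonneg': "0 \<le> ?\<mu>' k x" and fin': "finite (supp (?\<mu>' k))" for k x
    using post_entry_nonneg[OF pd \<epsilon>] supp' pop_distrD(2)[OF pd] by simp_all
  have ci': "c i \<in> supp (?\<mu>' i)" and t': "t \<in> supp (?\<mu>' i)"
    and cj': "c j \<in> supp (?\<mu>' j)" and sj': "sj \<in> supp (?\<mu>' j)"
    using supp' t sj by auto
  have le_i: "\<forall>\<theta>\<in>supp_prof ?\<mu>'. \<theta> i = c i \<longrightarrow>
      exp_pay As (\<pi> i) (?bt (\<theta>(i := t))) \<le> exp_pay As (\<pi> i) (?bt \<theta>)"
  proof (intro ballI impI)
    fix \<theta> assume \<theta>i: "\<theta> i = c i"
    have "R (\<theta>(i := t)) = (if \<theta> j = c j then \<theta>(i := t, j := sj) else \<theta>(i := t))"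
      using ij tc by (simp add: R_def)
    moreover have "R \<theta> = (if \<theta> j = c j then \<theta>(i := t, j := best (\<theta>(i := t))) else \<theta>(i := t))"
      using \<theta>i by (simp add: R_def)
    ultimately show "exp_pay As (\<pi> i) (?bt (\<theta>(i := t))) \<le> exp_pay As (\<pi> i) (?bt \<theta>)"
      using best(2)[of "\<theta>(i := t)"] sj by (simp add: F_def)
  qed
  have eq_j: "\<forall>\<theta>\<in>supp_prof ?\<mu>'. \<theta> j = c j \<longrightarrow>
      exp_pay As (\<pi> j) (?bt (\<theta>(j := sj))) = exp_pay As (\<pi> j) (?bt \<theta>)"
  proof (intro ballI impI)
    fix \<theta> assume \<theta>: "\<theta> \<in> supp_prof ?\<mu>'" and \<theta>j: "\<theta> j = c j"
    have R_sj: "R (\<theta>(j := sj)) = (if \<theta> i = c i then \<theta>(i := t, j := sj) else \<theta>(j := sj))"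
      using ij sc by (auto simp: R_def intro!: ext)
    have R\<theta>: "R \<theta> = (if \<theta> i = c i then \<theta>(i := t, j := best (\<theta>(i := t))) else \<theta>(j := sj))"
      using \<theta>j by (simp add: R_def)
    show "exp_pay As (\<pi> j) (?bt (\<theta>(j := sj))) = exp_pay As (\<pi> j) (?bt \<theta>)"
    proof (cases "\<theta> i = c i")
      case True
      have "\<theta>(i := t, j := sj) \<in> supp_prof \<mu>"
        using \<theta> t sj \<theta>j True ci cj by (auto simp: mem_supp_prof supp' split: if_splits)
      from own_payoff_invariant[OF fg pd b st this best(1)]
      show ?thesis using R_sj R\<theta> True by simp
    qed (use R_sj R\<theta> in simp)
  qed
  have "avg_fit As \<pi> ?\<mu>' ?bt i t \<le> avg_fit As \<pi> ?\<mu>' ?bt i (c i)"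
    using nonneg' fin' ci' t' le_i by (rule avg_fit_le_of_payoff_le)
  with t have "\<exists>u\<in>supp (\<mu> i). avg_fit As \<pi> ?\<mu>' ?bt i u \<le> avg_fit As \<pi> ?\<mu>' ?bt i (c i)"
    by (intro bexI[of _ t])
  moreover have "avg_fit As \<pi> ?\<mu>' ?bt j sj = avg_fit As \<pi> ?\<mu>' ?bt j (c j)"
    using cj' sj' eq_j by (rule avg_fit_eq_of_payoff_eq)
  with sj have "\<exists>u\<in>supp (\<mu> j). avg_fit As \<pi> ?\<mu>' ?bt j u \<le> avg_fit As \<pi> ?\<mu>' ?bt j (c j)"
    by (intro bexI[of _ sj]) simp_all
  ultimately have "\<forall>k\<in>{i, j}. \<exists>u\<in>supp (\<mu> k). avg_fit As \<pi> ?\<mu>' ?bt k u \<le> avg_fit As \<pi> ?\<mu>' ?bt k (c k)"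
    by simp
  then have "balanced As \<pi> ?\<mu>' ?bt" by (rule balanced_if)
  with nonneg' fin' ci' t' le_i have eq_i: "\<forall>\<theta>\<in>supp_prof ?\<mu>'. \<theta> i = c i \<longrightarrow>
      exp_pay As (\<pi> i) (?bt (\<theta>(i := t))) = exp_pay As (\<pi> i) (?bt \<theta>)"
    by (rule payoff_eq_of_balanced)
  define \<theta>0 where "\<theta>0 = \<theta>1(i := c i, j := c j)"
  have "\<theta>0 \<in> supp_prof ?\<mu>'" using \<theta>1 supp' by (auto simp: \<theta>0_def mem_supp_prof)
  moreover have "\<theta>0 i = c i" using ij by (simp add: \<theta>0_def)
  ultimately have "exp_pay As (\<pi> i) (?bt (\<theta>0(i := t))) = exp_pay As (\<pi> i) (?bt \<theta>0)"
    using eq_i by blast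
  moreover have "\<theta>0(i := t) = \<theta>1(j := c j)" using ij by (auto simp: \<theta>0_def t_def intro!: ext)
  moreover have "R (\<theta>1(j := c j)) = \<theta>1"
    using ij tc by (auto simp: R_def t_def sj_def intro!: ext)
  moreover have "R \<theta>0 = \<theta>1(j := best (\<theta>1(j := c j)))"
    using \<open>\<theta>0 i = c i\<close> \<open>\<theta>0(i := t) = \<theta>1(j := c j)\<close> by (simp add: R_def \<theta>0_def)
  ultimately have "F \<theta>1 = F (\<theta>1(j := best (\<theta>1(j := c j))))" by (simp add: F_def)
  moreover have "F (\<theta>1(j := s)) \<le> F (\<theta>1(j := best (\<theta>1(j := c j))))"
    using best(2)[of "\<theta>1(j := c j)"] s by simp
  ultimately show ?thesis unfolding F_def by linarith
qed

lemma payoff_invariant_update: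
  fixes As :: "'i::finite \<Rightarrow> 'a set"
  assumes "finite_game As" "pop_distr As \<mu>" "b \<in> B1 As \<mu>" "stable As \<pi> \<mu> b"
    and \<theta>: "\<theta> \<in> supp_prof \<mu>" and x: "x \<in> supp (\<mu> k)"
  shows "exp_pay As (\<pi> i) (b (\<theta>(k := x))) = exp_pay As (\<pi> i) (b \<theta>)"
proof (cases "k = i")
  case True
  then show ?thesis using own_payoff_invariant[OF assms] by simp
next
  case False
  then have ik: "i \<noteq> k" by simp
  have "\<theta>(k := x) \<in> supp_prof \<mu>" "\<theta> k \<in> supp (\<mu> k)" using \<theta> x by (auto simp: mem_supp_prof)
  from other_payoff_le[OF assms(1-4) ik this]
  have "exp_pay As (\<pi> i) (b \<theta>) \<le> exp_pay As (\<pi> i) (b (\<theta>(k := x)))" by simp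
  with other_payoff_le[OF assms(1-4) ik \<theta> x] show ?thesis by simp
qed

lemma payoff_const_on_supp_prof:
  fixes As :: "'i::finite \<Rightarrow> 'a set"
  assumes "finite_game As" "pop_distr As \<mu>" "b \<in> B1 As \<mu>" "stable As \<pi> \<mu> b"
    and "\<theta> \<in> supp_prof \<mu>" "\<theta>' \<in> supp_prof \<mu>"
  shows "exp_pay As (\<pi> i) (b \<theta>') = exp_pay As (\<pi> i) (b \<theta>)"
proof (rule PiE_UNIV_eq_of_update_invariant[where G="\<lambda>\<theta>. exp_pay As (\<pi> i) (b \<theta>)"
      and A="\<lambda>k. supp (\<mu> k)"])
  show "exp_pay As (\<pi> i) (b (\<theta>(k := x))) = exp_pay As (\<pi> i) (b \<theta>)"
    if "\<theta> \<in> PiE UNIV (\<lambda>k. supp (\<mu> k))" and "x \<in> supp (\<mu> k)" for \<theta> k x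
    using payoff_invariant_update[OF assms(1-4)] that by (simp add: supp_prof_def)
qed (use assms(5,6) in \<open>simp_all add: supp_prof_def\<close>)

theorem mainTheorem3:
  fixes As :: "'i::finite \<Rightarrow> 'a set"
    and \<pi> :: "'i \<Rightarrow> ('i,'a) utility"
    and \<mu> :: "'i \<Rightarrow> ('i,'a) utility \<Rightarrow> real"
    and b :: "('i \<Rightarrow> ('i,'a) utility) \<Rightarrow> ('i \<Rightarrow> 'a \<Rightarrow> real)"
  assumes "finite_game As"
    and "pop_distr As \<mu>"
    and "b \<in> B1 As \<mu>"
    and "stable As \<pi> \<mu> b"
  shows "\<forall>i. \<forall>tb\<in>supp (\<mu> i). \<forall>\<theta>\<in>supp_prof \<mu>.
           avg_fit As \<pi> \<mu> b i tb = exp_pay As (\<pi> i) (b \<theta>)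
         \<and> exp_pay As (\<pi> i) (b \<theta>) = corr_pay As (\<pi> i) (aggregate \<mu> b)"
proof (intro allI ballI conjI)
  fix i tb \<theta> assume tb: "tb \<in> supp (\<mu> i)" and \<theta>: "\<theta> \<in> supp_prof \<mu>"
  have const: "\<forall>\<theta>'\<in>supp_prof \<mu>. exp_pay As (\<pi> i) (b \<theta>') = exp_pay As (\<pi> i) (b \<theta>)"
    using payoff_const_on_supp_prof[OF assms \<theta>] by blast
  show "avg_fit As \<pi> \<mu> b i tb = exp_pay As (\<pi> i) (b \<theta>)"
    using const by (rule avg_fit_const_payoff[OF assms(2) tb])
  have "corr_pay As (\<pi> i) (aggregate \<mu> b)
      = (\<Sum>\<theta>'\<in>supp_prof \<mu>. \<Prod>j\<in>UNIV. \<mu> j (\<theta>' j)) * exp_pay As (\<pi> i) (b \<theta>)"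
    unfolding corr_pay_aggregate sum_distrib_right using const by (intro sum.cong) auto
  then show "exp_pay As (\<pi> i) (b \<theta>) = corr_pay As (\<pi> i) (aggregate \<mu> b)"
    using sum_supp_prof_prod_eq_1[OF assms(2)] by simp
qed

end
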